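(* Let $\Omega\subset\mathbb{R}^d$ ($d\in\{2,3\}$) be a bounded polytopal Lipschitz domain, $\mathcal{T}_h$ a simplicial mesh of $\Omega$, $\alpha,\tau>0$, $k>0$, and let $\mathbf{m}_h^0\in\mathcal{M}_h$ and $\mathbf{v}_h^0\in\mathcal{K}_h[\mathbf{m}_h^0]$. Consider the nonlinear angular momentum method (defined in the context) and let $i\in\mathbb{N}_0$. Suppose that for each $n=0,\dots,i$, the pair $(\mathbf{m}_h^{n+1},\mathbf{w}_h^{n+1})\in\mathcal{S}^1(\mathcal{T}_h)^3\times\mathcal{S}^1(\mathcal{T}_h)^3$ satisfies the defining equations of the method at step $n$. Then $\mathbf{m}_h^{i+1}\in\mathcal{M}_h$ and $\mathbf{w}_h^{i+1}\in\mathcal{K}_h[\mathbf{m}_h^{i+1}]$.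
   Context: Let $\mathcal{N}_h$ be the set of vertices of $\mathcal{T}_h$ and $\mathcal{S}^1(\mathcal{T}_h)$ the space of continuous, piecewise affine functions on $\mathcal{T}_h$. The nodal hat functions are $\{\varphi_z\}_{z\in\mathcal{N}_h}$ with $\varphi_z(z')=\delta_{zz'}$. Let $\mathcal{I}_h$ denote the nodal interpolant onto $\mathcal{S}^1(\mathcal{T}_h)$, applied componentwise for vector fields. The mass-lumped product is $(\boldsymbol\psi,\boldsymbol\phi)_h=\int_\Omega\mathcal{I}_h[\boldsymbol\psi\cdot\boldsymbol\phi]$ for continuous $\boldsymbol\psi,\boldsymbol\phi:\overline\Omega\to\mathbb{R}^3$, and $\|\cdot\|_h$ is the induced norm. The effective field $\mathbf{h}_{\rm eff}[\mathbf{m}]\in\mathbf{H}^1(\Omega)^*$ is defined by $\langle\mathbf{h}_{\rm eff}[\mathbf{m}],\boldsymbol\phi\rangle=-(\nabla\mathbf{m},\nabla\boldsymbol\phi)_{L^2(\Omega)}$. The map $\mathbf{P}_h:\mathbf{H}^1(\Omega)^*\to\mathcal{S}^1(\mathcal{T}_h)^3$ is defined by $(\mathbf{P}_h\mathbf{u},\boldsymbol\phi_h)_h=\langle\mathbf{u},\boldsymbol\phi_h\rangle$ for all $\boldsymbol\phi_h\in\mathcal{S}^1(\mathcal{T}_h)^3$. Let $\mathcal{M}_h=\{\boldsymbol\phi_h\in\mathcal{S}^1(\mathcal{T}_h)^3:|\boldsymbol\phi_h(z)|=1\ \forall z\in\mathcal{N}_h\}$. For $\boldsymbol\psi_h\in\mathcal{S}^1(\mathcal{T}_h)^3$,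 let $\mathcal{K}_h[\boldsymbol\psi_h]=\{\boldsymbol\phi_h\in\mathcal{S}^1(\mathcal{T}_h)^3:\boldsymbol\psi_h(z)\cdot\boldsymbol\phi_h(z)=0\ \forall z\in\mathcal{N}_h\}$. Notation: $d_t\phi^{i+1}=(\phi^{i+1}-\phi^i)/k$ and $\phi^{i+1/2}=(\phi^{i+1}+\phi^i)/2$. Nonlinear angular momentum method: set $\mathbf{w}_h^0=\mathcal{I}_h[\mathbf{m}_h^0\times\mathbf{v}_h^0]$. For each $i\in\mathbb{N}_0$, find $(\mathbf{m}_h^{i+1},\mathbf{w}_h^{i+1})$ such that for all $\boldsymbol\phi_h,\boldsymbol\psi_h\in\mathcal{S}^1(\mathcal{T}_h)^3$: $$(d_t\mathbf{m}_h^{i+1},\boldsymbol\phi_h)_h=-(\mathbf{m}_h^{i+1/2}\times\mathbf{w}_h^{i+1/2},\boldsymbol\phi_h)_h,$$ $$\tau(d_t\mathbf{w}_h^{i+1},\boldsymbol\psi_h)_h=(\mathbf{m}_h^{i+1/2}\times\mathbf{P}_h\mathbf{h}_{\rm eff}[\mathbf{m}_h^{i+1/2}],\boldsymbol\psi_h)_h-\alpha(\mathbf{m}_h^{i+1/2}\times d_t\mathbf{m}_h^{i+1},\boldsymbol\psi_h)_h-(\mathbf{m}_h^{i+1/2}\times\mathbf{w}_h^{i+1/2},\boldsymbol\psi_h)_h.$$ *)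

theory Defs
  imports "HOL-Analysis.Analysis"
begin

text \<open>Bounded Lipschitz domain: open, bounded, connected; near each boundary point
  the domain is (in suitably rotated coordinates, given by a unit direction e)
  the subgraph of a Lipschitz function on the hyperplane orthogonal to e.\<close>
definition lipschitz_domain :: "'a::euclidean_space set \<Rightarrow> bool" where
  "lipschitz_domain \<Omega> \<longleftrightarrow> open \<Omega> \<and> bounded \<Omega> \<and> connected \<Omega> \<and> \<Omega> \<noteq> {} \<and>
     (\<forall>x\<in>frontier \<Omega>. \<exists>r>0. \<exists>e g L. norm e = 1 \<and>
        L-lipschitz_on {u. u \<bullet> e = 0} g \<and>
        \<Omega> \<inter> ball x r = {y \<in> ball x r. y \<bullet> e < g (y - (y \<bullet> e) *\<^sub>R e)})"

definition verts :: "'a::euclidean_space set \<Rightarrow> 'a set" where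
  "verts T = {x. x extreme_point_of T}"

definition is_simplex :: "'a::euclidean_space set \<Rightarrow> bool" where
  "is_simplex T \<longleftrightarrow> (\<exists>S. finite S \<and> card S = DIM('a) + 1 \<and> \<not> affine_dependent S \<and> T = convex hull S)"

definition simplicial_mesh :: "'a::euclidean_space set set \<Rightarrow> 'a set \<Rightarrow> bool" where
  "simplicial_mesh \<T> \<Omega> \<longleftrightarrow> finite \<T> \<and> \<T> \<noteq> {} \<and> (\<forall>T\<in>\<T>. is_simplex T) \<and>
     \<Union>\<T> = closure \<Omega> \<and>
     (\<forall>T1\<in>\<T>. \<forall>T2\<in>\<T>. \<exists>S. S \<subseteq> verts T1 \<inter> verts T2 \<and> T1 \<inter> T2 = convex hull S)"

definition nodes :: "'a::euclidean_space set set \<Rightarrow> 'a set" where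
  "nodes \<T> = (\<Union>T\<in>\<T>. verts T)"

definition S1 :: "'a::euclidean_space set set \<Rightarrow> ('a \<Rightarrow> real) set" where
  "S1 \<T> = {f. continuous_on (\<Union>\<T>) f \<and>
      (\<forall>T\<in>\<T>. \<exists>a c. \<forall>x\<in>T. f x = a \<bullet> x + c) \<and> (\<forall>x. x \<notin> \<Union>\<T> \<longrightarrow> f x = 0)}"

definition S1v :: "'a::euclidean_space set set \<Rightarrow> ('a \<Rightarrow> real^3) set" where
  "S1v \<T> = {f. \<forall>j. (\<lambda>x. f x $ j) \<in> S1 \<T>}"

definition hat :: "'a::euclidean_space set set \<Rightarrow> 'a \<Rightarrow> 'a \<Rightarrow> real" where
  "hat \<T> z = (THE f. f \<in> S1 \<T> \<and> (\<forall>z'\<in>nodes \<T>. f z' = (if z' = z then 1 else 0)))"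

definition interp :: "'a::euclidean_space set set \<Rightarrow> ('a \<Rightarrow> real) \<Rightarrow> 'a \<Rightarrow> real" where
  "interp \<T> f = (\<lambda>x. \<Sum>z\<in>nodes \<T>. f z * hat \<T> z x)"

definition interpv :: "'a::euclidean_space set set \<Rightarrow> ('a \<Rightarrow> real^3) \<Rightarrow> 'a \<Rightarrow> real^3" where
  "interpv \<T> f = (\<lambda>x. \<Sum>z\<in>nodes \<T>. hat \<T> z x *\<^sub>R f z)"

definition lumped :: "'a::euclidean_space set set \<Rightarrow> 'a set \<Rightarrow> ('a \<Rightarrow> real^3) \<Rightarrow> ('a \<Rightarrow> real^3) \<Rightarrow> real" where
  "lumped \<T> \<Omega> \<psi> \<phi> = integral \<Omega> (interp \<T> (\<lambda>x. \<psi> x \<bullet> \<phi> x))"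

definition grad_on :: "'a::euclidean_space set \<Rightarrow> ('a \<Rightarrow> real) \<Rightarrow> 'a" where
  "grad_on T f = (SOME a. \<exists>c. \<forall>x\<in>T. f x = a \<bullet> x + c)"

definition stiff :: "'a::euclidean_space set set \<Rightarrow> ('a \<Rightarrow> real^3) \<Rightarrow> ('a \<Rightarrow> real^3) \<Rightarrow> real" where
  "stiff \<T> m \<phi> = (\<Sum>T\<in>\<T>. integral T (\<lambda>_. \<Sum>j\<in>UNIV.
        grad_on T (\<lambda>x. m x $ j) \<bullet> grad_on T (\<lambda>x. \<phi> x $ j)))"

definition heff :: "'a::euclidean_space set set \<Rightarrow> ('a \<Rightarrow> real^3) \<Rightarrow> ('a \<Rightarrow> real^3) \<Rightarrow> real" where
  "heff \<T> m = (\<lambda>\<phi>. - stiff \<T> m \<phi>)"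

definition Ph :: "'a::euclidean_space set set \<Rightarrow> 'a set \<Rightarrow> (('a \<Rightarrow> real^3) \<Rightarrow> real) \<Rightarrow> 'a \<Rightarrow> real^3" where
  "Ph \<T> \<Omega> u = (THE p. p \<in> S1v \<T> \<and> (\<forall>\<phi>\<in>S1v \<T>. lumped \<T> \<Omega> p \<phi> = u \<phi>))"

definition Mh :: "'a::euclidean_space set set \<Rightarrow> ('a \<Rightarrow> real^3) set" where
  "Mh \<T> = {\<phi> \<in> S1v \<T>. \<forall>z\<in>nodes \<T>. norm (\<phi> z) = 1}"

definition Kh :: "'a::euclidean_space set set \<Rightarrow> ('a \<Rightarrow> real^3) \<Rightarrow> ('a \<Rightarrow> real^3) set" where
  "Kh \<T> \<psi> = {\<phi> \<in> S1v \<T>. \<forall>z\<in>nodes \<T>. \<psi> z \<bullet> \<phi> z = 0}"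

definition nam_step :: "'a::euclidean_space set set \<Rightarrow> 'a set \<Rightarrow> real \<Rightarrow> real \<Rightarrow> real \<Rightarrow>
    (nat \<Rightarrow> 'a \<Rightarrow> real^3) \<Rightarrow> (nat \<Rightarrow> 'a \<Rightarrow> real^3) \<Rightarrow> nat \<Rightarrow> bool" where
  "nam_step \<T> \<Omega> \<alpha> \<tau> k m w n \<longleftrightarrow>
     (let dtm = (\<lambda>x. (1 / k) *\<^sub>R (m (Suc n) x - m n x));
          dtw = (\<lambda>x. (1 / k) *\<^sub>R (w (Suc n) x - w n x));
          mh = (\<lambda>x. (1 / 2) *\<^sub>R (m (Suc n) x + m n x));
          wh = (\<lambda>x. (1 / 2) *\<^sub>R (w (Suc n) x + w n x));
          H = Ph \<T> \<Omega> (heff \<T> mh)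
      in (\<forall>\<phi>\<in>S1v \<T>. lumped \<T> \<Omega> dtm \<phi> = - lumped \<T> \<Omega> (\<lambda>x. cross3 (mh x) (wh x)) \<phi>) \<and>
         (\<forall>\<psi>\<in>S1v \<T>. \<tau> * lumped \<T> \<Omega> dtw \<psi> =
             lumped \<T> \<Omega> (\<lambda>x. cross3 (mh x) (H x)) \<psi>
           - \<alpha> * lumped \<T> \<Omega> (\<lambda>x. cross3 (mh x) (dtm x)) \<psi>
           - lumped \<T> \<Omega> (\<lambda>x. cross3 (mh x) (wh x)) \<psi>))"

end

theory Submission
  imports Defs
begin

text \<open>Testing both equations with \<open>\<phi>\<^sub>z e\<close> localises the mass-lumped products at the node z
  (with weight \<open>\<integral>\<phi>\<^sub>z > 0\<close>), so the scheme holds pointwise at every node. Writing \<open>m', w'\<close>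
  for the midpoint values there, \<open>d\<^sub>t m = - m' \<times> w'\<close> is orthogonal to \<open>m'\<close> and \<open>w'\<close>, and
  \<open>\<tau> d\<^sub>t w\<close> is a cross product with \<open>m'\<close>, hence orthogonal to \<open>m'\<close>. By the identity
  \<open>2 (a\<^sub>1 \<bullet> b\<^sub>1 - a\<^sub>0 \<bullet> b\<^sub>0) = (a\<^sub>1 - a\<^sub>0) \<bullet> (b\<^sub>1 + b\<^sub>0) + (b\<^sub>1 - b\<^sub>0) \<bullet> (a\<^sub>1 + a\<^sub>0)\<close>
  every step preserves \<open>|m(z)|\<^sup>2\<close> and \<open>m(z) \<bullet> w(z)\<close>, which are 1 and 0 initially because
  \<open>w\<^sup>0(z) = m\<^sup>0(z) \<times> v\<^sup>0(z)\<close>.\<close>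

lemma convex_hull_affine_weights:
  fixes S :: "'a::euclidean_space set"
  assumes "finite S" and "x \<in> convex hull S"
  obtains u where "\<forall>v\<in>S. 0 \<le> u v" and "\<And>a c. a \<bullet> x + c = (\<Sum>v\<in>S. u v * (a \<bullet> v + c))"
proof -
  obtain u where u: "\<forall>v\<in>S. 0 \<le> u v" "sum u S = 1" "(\<Sum>v\<in>S. u v *\<^sub>R v) = x"
    using assms convex_hull_finite[OF assms(1)] by auto
  have "a \<bullet> x + c = (\<Sum>v\<in>S. u v * (a \<bullet> v + c))" for a c
  proof -
    have "(\<Sum>v\<in>S. u v * (a \<bullet> v + c)) = (\<Sum>v\<in>S. u v * (a \<bullet> v)) + c * sum u S"
      by (simp add: algebra_simps sum.distrib sum_distrib_left)
    also have "(\<Sum>v\<in>S. u v * (a \<bullet> v)) = a \<bullet> x"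
      using u(3)[symmetric] by (simp add: inner_sum_right)
    finally show ?thesis using u(2) by simp
  qed
  with u(1) show ?thesis by (rule that)
qed

lemma affine_eq_on_convex_hull:
  fixes a a' :: "'a::euclidean_space"
  assumes "finite S" and "x \<in> convex hull S" and "\<forall>v\<in>S. a \<bullet> v + c = a' \<bullet> v + c'"
  shows "a \<bullet> x + c = a' \<bullet> x + c'"
proof -
  obtain u where "\<forall>v\<in>S. 0 \<le> u v" and u: "\<And>a c. a \<bullet> x + c = (\<Sum>v\<in>S. u v * (a \<bullet> v + c))"
    using convex_hull_affine_weights[OF assms(1,2)] by metis
  show ?thesis
    unfolding u[of a c] u[of a' c'] using assms(3) by (intro sum.cong) auto
qed

lemma affine_independent_interpolation:
  fixes S :: "'a::euclidean_space set" and h :: "'a \<Rightarrow> real"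
  assumes "\<not> affine_dependent S"
  shows "\<exists>a c. \<forall>v\<in>S. a \<bullet> v + c = h v"
proof (cases "S = {}")
  case True
  then show ?thesis by simp
next
  case False
  then obtain v0 where v0: "v0 \<in> S" by auto
  define S' where "S' = S - {v0}"
  have S: "S = insert v0 S'" "v0 \<notin> S'" using v0 by (auto simp: S'_def)
  have ind: "independent ((\<lambda>x. - v0 + x) ` S')"
    using assms affine_dependent_iff_dependent[OF S(2)] S(1) by simp
  then obtain g where g: "linear g" "\<forall>y\<in>(\<lambda>x. - v0 + x) ` S'. g y = h (v0 + y) - h v0"
    using linear_independent_extend[OF ind, of "\<lambda>y. h (v0 + y) - h v0"] by blast
  define a where "a = adjoint g 1"
  have ga: "g y = a \<bullet> y" for y
    using adjoint_works[OF g(1), of y 1] by (simp add: a_def inner_commute)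
  have "a \<bullet> v + (h v0 - a \<bullet> v0) = h v" if "v \<in> S" for v
  proof (cases "v = v0")
    case False
    then have "g (- v0 + v) = h v - h v0" using g(2) that by (auto simp: S'_def)
    then show ?thesis by (simp add: ga algebra_simps)
  qed simp
  then show ?thesis by blast
qed

lemma is_simplex_verts:
  assumes "is_simplex T"
  shows "finite (verts T)" and "\<not> affine_dependent (verts T)" and "T = convex hull (verts T)"
    and "verts T \<subseteq> T" and "closed T"
proof -
  obtain S where S: "finite S" "\<not> affine_dependent S" "T = convex hull S"
    using assms unfolding is_simplex_def by blast
  have V: "verts T = S"
    unfolding verts_def S(3) extreme_point_of_convex_hull_affine_independent[OF S(2)] by simp
  show "finite (verts T)" "\<not> affine_dependent (verts T)" "T = convex hull (verts T)"
    using S V by simp_all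
  show "verts T \<subseteq> T" using V S(3) hull_subset by metis
  show "closed T" using S by (simp add: compact_convex_hull finite_imp_compact compact_imp_closed)
qed

lemma simplicial_meshD:
  assumes "simplicial_mesh \<T> \<Omega>"
  shows "finite \<T>" and "\<And>T. T \<in> \<T> \<Longrightarrow> is_simplex T" and "\<Union>\<T> = closure \<Omega>"
    and "\<And>T T'. T \<in> \<T> \<Longrightarrow> T' \<in> \<T> \<Longrightarrow> \<exists>S. S \<subseteq> verts T \<inter> verts T' \<and> T \<inter> T' = convex hull S"
  using assms unfolding simplicial_mesh_def by blast+

lemma finite_nodes:
  assumes "simplicial_mesh \<T> \<Omega>"
  shows "finite (nodes \<T>)"
  unfolding nodes_def using simplicial_meshD(1,2)[OF assms] is_simplex_verts(1)
  by (intro finite_UN_I) blast+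

lemma verts_subset_nodes: "T \<in> \<T> \<Longrightarrow> verts T \<subseteq> nodes \<T>"
  unfolding nodes_def by blast

lemma S1D:
  assumes "f \<in> S1 \<T>"
  shows "continuous_on (\<Union>\<T>) f" and "\<And>T. T \<in> \<T> \<Longrightarrow> \<exists>a c. \<forall>x\<in>T. f x = a \<bullet> x + c"
    and "\<And>x. x \<notin> \<Union>\<T> \<Longrightarrow> f x = 0"
  using assms unfolding S1_def by blast+

lemma S1_vertex_weights:
  assumes M: "simplicial_mesh \<T> \<Omega>" and T: "T \<in> \<T>" "x \<in> T"
  obtains u where "\<forall>v\<in>verts T. 0 \<le> u v" and "\<And>f. f \<in> S1 \<T> \<Longrightarrow> f x = (\<Sum>v\<in>verts T. u v * f v)"
proof -
  have sx: "is_simplex T" using simplicial_meshD(2)[OF M T(1)] .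
  have "x \<in> convex hull (verts T)" using T(2) is_simplex_verts(3)[OF sx] by simp
  then obtain u where u0: "\<forall>v\<in>verts T. 0 \<le> u v"
      and u: "\<And>a c. a \<bullet> x + c = (\<Sum>v\<in>verts T. u v * (a \<bullet> v + c))"
    using convex_hull_affine_weights[OF is_simplex_verts(1)[OF sx]] by metis
  have "f x = (\<Sum>v\<in>verts T. u v * f v)" if f: "f \<in> S1 \<T>" for f
  proof -
    obtain a c where ac: "\<forall>y\<in>T. f y = a \<bullet> y + c" using S1D(2)[OF f T(1)] by blast
    then have "f x = (\<Sum>v\<in>verts T. u v * (a \<bullet> v + c))" using T(2) u by metis
    also have "\<dots> = (\<Sum>v\<in>verts T. u v * f v)"
      using ac is_simplex_verts(4)[OF sx] by (intro sum.cong) auto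
    finally show ?thesis .
  qed
  with u0 show ?thesis by (rule that)
qed

lemma S1_eqI:
  assumes M: "simplicial_mesh \<T> \<Omega>" and f: "f \<in> S1 \<T>" and g: "g \<in> S1 \<T>"
    and nodal: "\<forall>z\<in>nodes \<T>. f z = g z"
  shows "f = g"
proof
  fix x
  show "f x = g x"
  proof (cases "x \<in> \<Union>\<T>")
    case True
    then obtain T where T: "T \<in> \<T>" "x \<in> T" by blast
    obtain u where "\<forall>v\<in>verts T. 0 \<le> u v" and u: "\<And>f. f \<in> S1 \<T> \<Longrightarrow> f x = (\<Sum>v\<in>verts T. u v * f v)"
      using S1_vertex_weights[OF M T] by metis
    show ?thesis
      unfolding u[OF f] u[OF g] using nodal verts_subset_nodes[OF T(1)] by (intro sum.cong) auto
  qed (simp add: S1D(3)[OF f] S1D(3)[OF g])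
qed

lemma S1_nonneg:
  assumes M: "simplicial_mesh \<T> \<Omega>" and f: "f \<in> S1 \<T>" and nodal: "\<forall>z\<in>nodes \<T>. 0 \<le> f z"
  shows "0 \<le> f x"
proof (cases "x \<in> \<Union>\<T>")
  case True
  then obtain T where T: "T \<in> \<T>" "x \<in> T" by blast
  obtain u where "\<forall>v\<in>verts T. 0 \<le> u v" and "f x = (\<Sum>v\<in>verts T. u v * f v)"
    using S1_vertex_weights[OF M T] f by metis
  then show ?thesis using nodal verts_subset_nodes[OF T(1)] by (auto intro!: sum_nonneg)
qed (simp add: S1D(3)[OF f])

lemma mesh_piecewise_affine_coeffs:
  fixes g :: "'a::euclidean_space \<Rightarrow> real"
  assumes M: "simplicial_mesh \<T> \<Omega>"
  obtains a c where "\<And>T v. T \<in> \<T> \<Longrightarrow> v \<in> verts T \<Longrightarrow> a T \<bullet> v + c T = g v"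
proof -
  have "\<forall>T\<in>\<T>. \<exists>a c. \<forall>v\<in>verts T. a \<bullet> v + c = g v"
    using affine_independent_interpolation is_simplex_verts(2) simplicial_meshD(2)[OF M] by blast
  then obtain a c where "\<forall>T\<in>\<T>. \<forall>v\<in>verts T. a T \<bullet> v + c T = g v" by metis
  then show ?thesis using that by blast
qed

lemma mesh_piecewise_affine_agree:
  assumes M: "simplicial_mesh \<T> \<Omega>"
    and coeffs: "\<And>T v. T \<in> \<T> \<Longrightarrow> v \<in> verts T \<Longrightarrow> a T \<bullet> v + c T = g v"
    and T: "T \<in> \<T>" "T' \<in> \<T>" "x \<in> T" "x \<in> T'"
  shows "a T \<bullet> x + c T = a T' \<bullet> x + c T'"
proof -
  obtain S where S: "S \<subseteq> verts T \<inter> verts T'" "T \<inter> T' = convex hull S"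
    using simplicial_meshD(4)[OF M T(1,2)] by blast
  have "finite S"
    by (rule finite_subset[OF _ is_simplex_verts(1)[OF simplicial_meshD(2)[OF M T(1)]]])
       (use S(1) in blast)
  moreover have "\<forall>v\<in>S. a T \<bullet> v + c T = a T' \<bullet> v + c T'"
  proof
    fix v assume "v \<in> S"
    then have "v \<in> verts T" "v \<in> verts T'" using S(1) by blast+
    then show "a T \<bullet> v + c T = a T' \<bullet> v + c T'" using coeffs T(1,2) by simp
  qed
  ultimately show ?thesis using S(2) T(3,4) by (intro affine_eq_on_convex_hull) auto
qed

lemma S1_interpolant_exists:
  fixes g :: "'a::euclidean_space \<Rightarrow> real"
  assumes M: "simplicial_mesh \<T> \<Omega>"
  obtains f where "f \<in> S1 \<T>" and "\<forall>z\<in>nodes \<T>. f z = g z"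
proof -
  obtain a c where coeffs: "\<And>T v. T \<in> \<T> \<Longrightarrow> v \<in> verts T \<Longrightarrow> a T \<bullet> v + c T = g v"
    using mesh_piecewise_affine_coeffs[OF M] by metis
  define f where "f x = (if x \<in> \<Union>\<T> then (let T = SOME T. T \<in> \<T> \<and> x \<in> T in a T \<bullet> x + c T) else 0)"
    for x
  have f_eq: "f x = a T \<bullet> x + c T" if T: "T \<in> \<T>" "x \<in> T" for T x
  proof -
    define T0 where "T0 = (SOME T. T \<in> \<T> \<and> x \<in> T)"
    have "T0 \<in> \<T> \<and> x \<in> T0" unfolding T0_def by (rule someI) (use T in blast)
    then have "a T0 \<bullet> x + c T0 = a T \<bullet> x + c T"
      using mesh_piecewise_affine_agree[where a = a and c = c and g = g, OF M coeffs] T by blast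
    moreover have "x \<in> \<Union>\<T>" using T by blast
    ultimately show ?thesis unfolding f_def T0_def[symmetric] by simp
  qed
  have "f \<in> S1 \<T>"
    unfolding S1_def
  proof (intro CollectI conjI ballI allI impI)
    have "continuous_on (\<Union>T\<in>\<T>. T) f"
    proof (rule continuous_on_closed_Union)
      fix T assume T: "T \<in> \<T>"
      have "continuous_on T (\<lambda>x. a T \<bullet> x + c T)" by (intro continuous_intros)
      then show "continuous_on T f" using f_eq[OF T] by (simp cong: continuous_on_cong)
    qed (use simplicial_meshD(1,2)[OF M] is_simplex_verts(5) in auto)
    then show "continuous_on (\<Union>\<T>) f" by simp
  next
    fix T assume "T \<in> \<T>"
    then show "\<exists>a c. \<forall>x\<in>T. f x = a \<bullet> x + c" using f_eq by blast
  qed (simp add: f_def)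
  moreover have "f z = g z" if z: "z \<in> nodes \<T>" for z
  proof -
    obtain T where T: "T \<in> \<T>" "z \<in> verts T" using z unfolding nodes_def by blast
    then have "z \<in> T" using is_simplex_verts(4)[OF simplicial_meshD(2)[OF M T(1)]] by blast
    then show ?thesis using f_eq[OF T(1)] coeffs[OF T] by simp
  qed
  ultimately show ?thesis by (intro that) auto
qed

lemma hat_spec:
  assumes M: "simplicial_mesh \<T> \<Omega>"
  shows "hat \<T> z \<in> S1 \<T> \<and> (\<forall>z'\<in>nodes \<T>. hat \<T> z z' = (if z' = z then 1 else 0))"
proof -
  obtain f where f: "f \<in> S1 \<T>" "\<forall>z'\<in>nodes \<T>. f z' = (if z' = z then 1 else 0)"
    using S1_interpolant_exists[OF M, of "\<lambda>z'. if z' = z then 1 else 0"] by metis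
  show ?thesis
    unfolding hat_def by (rule theI[of _ f]) (use f S1_eqI[OF M] in auto)
qed

lemma hat_in_S1: "simplicial_mesh \<T> \<Omega> \<Longrightarrow> hat \<T> z \<in> S1 \<T>"
  using hat_spec by blast

lemma hat_at_node:
  "simplicial_mesh \<T> \<Omega> \<Longrightarrow> z' \<in> nodes \<T> \<Longrightarrow> hat \<T> z z' = (if z' = z then 1 else 0)"
  using hat_spec by blast

lemma hat_nonneg:
  assumes M: "simplicial_mesh \<T> \<Omega>"
  shows "0 \<le> hat \<T> z x"
  using S1_nonneg[OF M hat_in_S1[OF M]] hat_at_node[OF M] by simp

lemma interpv_at_node:
  assumes M: "simplicial_mesh \<T> \<Omega>" and z: "z \<in> nodes \<T>"
  shows "interpv \<T> f z = f z"
proof -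
  have "interpv \<T> f z = (\<Sum>z'\<in>nodes \<T>. if z' = z then f z else 0)"
    unfolding interpv_def using hat_at_node[OF M z] by (intro sum.cong) auto
  also have "\<dots> = f z" using finite_nodes[OF M] z by simp
  finally show ?thesis .
qed

lemma continuous_on_compact_integrable_on:
  fixes f :: "'a::euclidean_space \<Rightarrow> real"
  assumes K: "compact K" and f: "continuous_on K f" and S: "S \<subseteq> K" "S \<in> lmeasurable"
  shows "f integrable_on S"
proof -
  obtain B where B: "\<forall>x\<in>K. norm (f x) \<le> B"
    using compact_imp_bounded[OF compact_continuous_image[OF f K]] unfolding bounded_iff by blast
  have "f \<in> borel_measurable (lebesgue_on S)"
    using continuous_imp_measurable_on_sets_lebesgue[OF continuous_on_subset[OF f S(1)]] S(2) by blast
  then have "f absolutely_integrable_on S"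
    by (rule measurable_bounded_by_integrable_imp_absolutely_integrable[OF _ _ integrable_on_const[OF S(2)]])
       (use S(2) B S(1) in auto)
  then show ?thesis unfolding absolutely_integrable_on_def by blast
qed

lemma integral_pos_of_continuous_nonneg:
  fixes f :: "'a::euclidean_space \<Rightarrow> real"
  assumes \<Omega>: "open \<Omega>" "bounded \<Omega>" and f: "continuous_on (closure \<Omega>) f"
    and nonneg: "\<And>x. x \<in> \<Omega> \<Longrightarrow> 0 \<le> f x" and z: "z \<in> closure \<Omega>" "0 < f z"
  shows "0 < integral \<Omega> f"
proof -
  obtain d where d: "d > 0" "\<forall>x\<in>closure \<Omega>. dist x z < d \<longrightarrow> dist (f x) (f z) < f z / 2"
    using f z unfolding continuous_on_iff by (meson half_gt_zero)
  obtain y where y: "y \<in> \<Omega>" "dist y z < d / 2"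
    using z(1) d(1) unfolding closure_approachable by (meson half_gt_zero)
  obtain r where r: "r > 0" "ball y r \<subseteq> \<Omega>" using \<Omega>(1) y(1) open_contains_ball by blast
  define \<rho> where "\<rho> = min r (d / 2)"
  have \<rho>: "\<rho> > 0" "ball y \<rho> \<subseteq> \<Omega>" using r d(1) by (auto simp: \<rho>_def)
  have big: "f z / 2 \<le> f x" if x: "x \<in> ball y \<rho>" for x
  proof -
    have "dist x z < d" using x y(2) dist_triangle[of x z y] by (simp add: \<rho>_def dist_commute)
    moreover have "x \<in> closure \<Omega>" using x \<rho>(2) closure_subset by blast
    ultimately have "dist (f x) (f z) < f z / 2" using d(2) by blast
    then show ?thesis unfolding dist_real_def by linarith
  qed
  have K: "compact (closure \<Omega>)" using \<Omega>(2) compact_closure by blast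
  have int_\<Omega>: "f integrable_on \<Omega>"
    by (rule continuous_on_compact_integrable_on[OF K f closure_subset lmeasurable_open[OF \<Omega>(2,1)]])
  have int_ball: "f integrable_on ball y \<rho>"
    by (rule continuous_on_compact_integrable_on[OF K f _ lmeasurable_ball])
       (use \<rho>(2) closure_subset in blast)
  have "0 < measure lebesgue (ball y \<rho>) * (f z / 2)"
    using content_ball_pos[OF \<rho>(1), of y] z(2) by simp
  also have "\<dots> = integral (ball y \<rho>) (\<lambda>_. 1 * (f z / 2))"
    by (simp only: integral_mult_left lmeasure_integral[OF lmeasurable_ball])
  also have "\<dots> \<le> integral (ball y \<rho>) f"
    by (rule integral_le[OF integrable_on_const[OF lmeasurable_ball] int_ball]) (use big in auto)
  also have "\<dots> \<le> integral \<Omega> f"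
    by (rule integral_subset_le[OF \<rho>(2) int_ball int_\<Omega>]) (use nonneg in auto)
  finally show ?thesis .
qed

lemma hat_integral_pos:
  assumes M: "simplicial_mesh \<T> \<Omega>" and L: "lipschitz_domain \<Omega>" and z: "z \<in> nodes \<T>"
  shows "0 < integral \<Omega> (hat \<T> z)"
proof (rule integral_pos_of_continuous_nonneg)
  show "open \<Omega>" "bounded \<Omega>" using L unfolding lipschitz_domain_def by blast+
  show "continuous_on (closure \<Omega>) (hat \<T> z)"
    using S1D(1)[OF hat_in_S1[OF M]] simplicial_meshD(3)[OF M] by simp
  show "0 \<le> hat \<T> z x" for x by (rule hat_nonneg[OF M])
  obtain T where T: "T \<in> \<T>" "z \<in> verts T" using z unfolding nodes_def by blast
  then have "z \<in> \<Union>\<T>" using is_simplex_verts(4)[OF simplicial_meshD(2)[OF M T(1)]] by blast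
  then show "z \<in> closure \<Omega>" using simplicial_meshD(3)[OF M] by simp
  show "0 < hat \<T> z z" using hat_at_node[OF M z] by simp
qed

lemma S1_mult_right:
  assumes f: "f \<in> S1 \<T>"
  shows "(\<lambda>x. f x * c) \<in> S1 \<T>"
  unfolding S1_def
proof (intro CollectI conjI ballI allI impI)
  show "continuous_on (\<Union>\<T>) (\<lambda>x. f x * c)" using S1D(1)[OF f] by (intro continuous_intros)
next
  fix T assume "T \<in> \<T>"
  then obtain a b where "\<forall>x\<in>T. f x = a \<bullet> x + b" using S1D(2)[OF f] by blast
  then have "\<forall>x\<in>T. f x * c = (c *\<^sub>R a) \<bullet> x + b * c" by (simp add: algebra_simps)
  then show "\<exists>a c'. \<forall>x\<in>T. f x * c = a \<bullet> x + c'" by blast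
qed (simp add: S1D(3)[OF f])

lemma hat_scaleR_in_S1v:
  assumes M: "simplicial_mesh \<T> \<Omega>"
  shows "(\<lambda>x. hat \<T> z x *\<^sub>R e) \<in> S1v \<T>"
  unfolding S1v_def using S1_mult_right[OF hat_in_S1[OF M]] by simp

lemma lumped_hat:
  assumes M: "simplicial_mesh \<T> \<Omega>" and z: "z \<in> nodes \<T>"
  shows "lumped \<T> \<Omega> \<psi> (\<lambda>x. hat \<T> z x *\<^sub>R e) = (\<psi> z \<bullet> e) * integral \<Omega> (hat \<T> z)"
proof -
  have "interp \<T> (\<lambda>x. \<psi> x \<bullet> (hat \<T> z x *\<^sub>R e)) x = (\<psi> z \<bullet> e) * hat \<T> z x" for x
  proof -
    have "interp \<T> (\<lambda>x. \<psi> x \<bullet> (hat \<T> z x *\<^sub>R e)) x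
        = (\<Sum>z'\<in>nodes \<T>. if z' = z then (\<psi> z \<bullet> e) * hat \<T> z x else 0)"
      unfolding interp_def using hat_at_node[OF M] by (intro sum.cong) auto
    also have "\<dots> = (\<psi> z \<bullet> e) * hat \<T> z x" using finite_nodes[OF M] z by simp
    finally show ?thesis .
  qed
  then have "interp \<T> (\<lambda>x. \<psi> x \<bullet> (hat \<T> z x *\<^sub>R e)) = (\<lambda>x. (\<psi> z \<bullet> e) * hat \<T> z x)" ..
  then show ?thesis unfolding lumped_def by simp
qed

lemma nam_step_at_node:
  assumes M: "simplicial_mesh \<T> \<Omega>" and L: "lipschitz_domain \<Omega>" and z: "z \<in> nodes \<T>"
    and step: "nam_step \<T> \<Omega> \<alpha> \<tau> k m w n"
  defines "dm \<equiv> (1 / k) *\<^sub>R (m (Suc n) z - m n z)" and "dw \<equiv> (1 / k) *\<^sub>R (w (Suc n) z - w n z)"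
    and "mh \<equiv> (1 / 2) *\<^sub>R (m (Suc n) z + m n z)" and "wh \<equiv> (1 / 2) *\<^sub>R (w (Suc n) z + w n z)"
  shows "dm = - cross3 mh wh"
    and "\<exists>H. \<tau> *\<^sub>R dw = cross3 mh H - \<alpha> *\<^sub>R cross3 mh dm - cross3 mh wh"
proof -
  define \<beta> where "\<beta> = integral \<Omega> (hat \<T> z)"
  have \<beta>: "\<beta> \<noteq> 0" using hat_integral_pos[OF M L z] by (simp add: \<beta>_def)
  define H where "H = Ph \<T> \<Omega> (heff \<T> (\<lambda>x. (1 / 2) *\<^sub>R (m (Suc n) x + m n x)))"
  note eqs = step[unfolded nam_step_def Let_def, folded H_def]
  note tested_with_hat = eqs[THEN conjunct1, rule_format, OF hat_scaleR_in_S1v[OF M]]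
    eqs[THEN conjunct2, rule_format, OF hat_scaleR_in_S1v[OF M]]
  have "dm \<bullet> e = - cross3 mh wh \<bullet> e" for e
  proof -
    have "(dm \<bullet> e) * \<beta> = (- cross3 mh wh \<bullet> e) * \<beta>"
      using tested_with_hat(1)[of z e]
      unfolding lumped_hat[OF M z] dm_def mh_def wh_def \<beta>_def by simp
    then show ?thesis using mult_right_cancel[OF \<beta>] by blast
  qed
  then show "dm = - cross3 mh wh" using vector_eq_rdot[of dm "- cross3 mh wh"] by simp
  have "(\<tau> *\<^sub>R dw) \<bullet> e = (cross3 mh (H z) - \<alpha> *\<^sub>R cross3 mh dm - cross3 mh wh) \<bullet> e" for e
  proof -
    have "(\<tau> * (dw \<bullet> e)) * \<beta> = (cross3 mh (H z) \<bullet> e - \<alpha> * (cross3 mh dm \<bullet> e) - cross3 mh wh \<bullet> e) * \<beta>"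
      using tested_with_hat(2)[of z e]
      unfolding lumped_hat[OF M z] dm_def dw_def mh_def wh_def \<beta>_def
      by (simp add: algebra_simps)
    then show ?thesis using \<beta> by (simp add: inner_diff_left)
  qed
  then have "\<tau> *\<^sub>R dw = cross3 mh (H z) - \<alpha> *\<^sub>R cross3 mh dm - cross3 mh wh"
    by (metis vector_eq_rdot)
  then show "\<exists>H. \<tau> *\<^sub>R dw = cross3 mh H - \<alpha> *\<^sub>R cross3 mh dm - cross3 mh wh" ..
qed

lemma inner_conserved_by_orthogonal_increments:
  fixes a0 a1 b0 b1 :: "'a::real_inner"
  assumes "(a1 - a0) \<bullet> (b1 + b0) = 0" and "(b1 - b0) \<bullet> (a1 + a0) = 0"
  shows "a1 \<bullet> b1 = a0 \<bullet> b0"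
proof -
  have "2 * (a1 \<bullet> b1 - a0 \<bullet> b0) = (a1 - a0) \<bullet> (b1 + b0) + (b1 - b0) \<bullet> (a1 + a0)"
    by (simp add: inner_commute algebra_simps)
  with assms show ?thesis by simp
qed

lemma nam_step_conserves_at_node:
  assumes M: "simplicial_mesh \<T> \<Omega>" and L: "lipschitz_domain \<Omega>" and z: "z \<in> nodes \<T>"
    and step: "nam_step \<T> \<Omega> \<alpha> \<tau> k m w n" and k: "0 < k" and \<tau>: "0 < \<tau>"
  shows "m (Suc n) z \<bullet> m (Suc n) z = m n z \<bullet> m n z"
    and "m (Suc n) z \<bullet> w (Suc n) z = m n z \<bullet> w n z"
proof -
  define dm where "dm = (1 / k) *\<^sub>R (m (Suc n) z - m n z)"
  define dw where "dw = (1 / k) *\<^sub>R (w (Suc n) z - w n z)"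
  define mh where "mh = (1 / 2) *\<^sub>R (m (Suc n) z + m n z)"
  define wh where "wh = (1 / 2) *\<^sub>R (w (Suc n) z + w n z)"
  have dm: "dm = - cross3 mh wh"
    using nam_step_at_node(1)[OF M L z step] unfolding dm_def mh_def wh_def .
  obtain H where dw: "\<tau> *\<^sub>R dw = cross3 mh H - \<alpha> *\<^sub>R cross3 mh dm - cross3 mh wh"
    using nam_step_at_node(2)[OF M L z step] unfolding dm_def dw_def mh_def wh_def by blast
  have dm_mh: "dm \<bullet> mh = 0" and dm_wh: "dm \<bullet> wh = 0"
    unfolding dm by (simp_all add: dot_cross_self inner_commute)
  have "\<tau> * (dw \<bullet> mh) = 0"
    using arg_cong[OF dw, of "\<lambda>v. v \<bullet> mh"] by (simp add: inner_diff_right dot_cross_self inner_commute)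
  then have dw_mh: "dw \<bullet> mh = 0" using \<tau> by simp
  have increments: "m (Suc n) z - m n z = k *\<^sub>R dm" "w (Suc n) z - w n z = k *\<^sub>R dw"
    and sums: "m (Suc n) z + m n z = 2 *\<^sub>R mh" "w (Suc n) z + w n z = 2 *\<^sub>R wh"
    using k by (simp_all add: dm_def dw_def mh_def wh_def)
  show "m (Suc n) z \<bullet> m (Suc n) z = m n z \<bullet> m n z"
    by (rule inner_conserved_by_orthogonal_increments) (simp_all add: increments sums dm_mh)
  show "m (Suc n) z \<bullet> w (Suc n) z = m n z \<bullet> w n z"
    by (rule inner_conserved_by_orthogonal_increments)
      (simp_all add: increments sums dm_wh dw_mh inner_commute)
qed

lemma nam_conserves_at_node:
  assumes M: "simplicial_mesh \<T> \<Omega>" and L: "lipschitz_domain \<Omega>" and z: "z \<in> nodes \<T>"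
    and steps: "\<forall>n<N. nam_step \<T> \<Omega> \<alpha> \<tau> k m w n" and k: "0 < k" and \<tau>: "0 < \<tau>"
  shows "m N z \<bullet> m N z = m 0 z \<bullet> m 0 z \<and> m N z \<bullet> w N z = m 0 z \<bullet> w 0 z"
  using steps
proof (induction N)
  case (Suc n)
  then show ?case using nam_step_conserves_at_node[OF M L z _ k \<tau>, of \<alpha> m w n] by simp
qed simp

theorem proposition3p3:
  fixes \<Omega> :: "'a::euclidean_space set" and \<T> :: "'a set set"
    and \<alpha> \<tau> k :: real and m w :: "nat \<Rightarrow> 'a \<Rightarrow> real^3" and v0 :: "'a \<Rightarrow> real^3" and i :: nat
  assumes "DIM('a) = 2 \<or> DIM('a) = 3"
    and "lipschitz_domain \<Omega>"
    and "simplicial_mesh \<T> \<Omega>"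
    and "\<alpha> > 0" and "\<tau> > 0" and "k > 0"
    and "m 0 \<in> Mh \<T>" and "v0 \<in> Kh \<T> (m 0)"
    and "w 0 = interpv \<T> (\<lambda>x. cross3 (m 0 x) (v0 x))"
    and "\<forall>n\<le>i. m (Suc n) \<in> S1v \<T> \<and> w (Suc n) \<in> S1v \<T> \<and> nam_step \<T> \<Omega> \<alpha> \<tau> k m w n"
  shows "m (Suc i) \<in> Mh \<T> \<and> w (Suc i) \<in> Kh \<T> (m (Suc i))"
proof -
  note L = assms(2) and M = assms(3) and \<tau> = assms(5) and k = assms(6) and m0 = assms(7)
    and w0 = assms(9) and steps = assms(10)
  have "norm (m (Suc i) z) = 1 \<and> m (Suc i) z \<bullet> w (Suc i) z = 0" if z: "z \<in> nodes \<T>" for z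
  proof -
    have "m 0 z \<bullet> m 0 z = 1" using m0 z unfolding Mh_def by (simp add: norm_eq_1)
    moreover have "w 0 z = cross3 (m 0 z) (v0 z)" unfolding w0 by (rule interpv_at_node[OF M z])
    moreover have "m (Suc i) z \<bullet> m (Suc i) z = m 0 z \<bullet> m 0 z
        \<and> m (Suc i) z \<bullet> w (Suc i) z = m 0 z \<bullet> w 0 z"
      by (rule nam_conserves_at_node[OF M L z _ k \<tau>, where \<alpha> = \<alpha>]) (use steps in simp)
    ultimately show ?thesis by (simp add: norm_eq_1 dot_cross_self)
  qed
  then show ?thesis using steps unfolding Mh_def Kh_def by blast
qed

end
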